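(* Let $\mathbf{V}\in\mathbb{R}^{N\times N}$ with $\mathbf{1}_N^\top\mathbf{V}=\mathbf{1}_N^\top$ and $\mathbf{V}\boldsymbol\mu=\boldsymbol\mu$, and $\mathbf{A}\in\mathbb{R}^{T\times N}$ with $\mathbf{1}_T^\top\mathbf{A}=\mathbf{1}_N^\top$. Then $$\mathbb{E}\hat\nabla_{\mathbf{V}}l=\|\mathbf{A}\|_\mu^2(\mathbf{V}-\boldsymbol\mu\mathbf{1}^\top)-\langle\mathbf{Q},\mathbf{A}\rangle_\mu(\mathbf{P}-\boldsymbol\mu\mathbf{1}^\top),$$ and for each $k\in[N]$, $$\mathbb{E}\hat\nabla_{\mathbf{a}^{(k)}}l=(\|\mathbf{V}\|_\mu^2-\|\boldsymbol\mu\|^2)\Big(\mathbf{a}^{(k)}-\frac{\mathbf{1}}{T}\Big)-(\langle\mathbf{V},\mathbf{P}\rangle_\mu-\|\boldsymbol\mu\|^2)\Big(\mathbf{q}^{(k)}-\frac{\mathbf{1}}{T}\Big).$$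
   Context: Let $\mathbf{P}\in\mathbb{R}^{N\times N}$ have nonnegative entries with columns summing to $1$, and let $\boldsymbol\mu\in\mathbb{R}^N$ be a probability vector with positive entries and $\mathbf{P}\boldsymbol\mu=\boldsymbol\mu$. Let $\mathbf{Q}=(\mathbf{q}^{(1)},\dots,\mathbf{q}^{(N)})\in\mathbb{R}^{T\times N}$ with each $\mathbf{q}^{(k)}$ a probability vector. Data: $x_1,\dots,x_{T+1}$ i.i.d. with law $\boldsymbol\mu$, and $x_o$ with $\Pr(x_o=n\mid x_{T+1}=k,x_1,\dots,x_T)=\sum_tq^{(k)}_tP_{n,x_t}$; $\mathbf{X}=(\mathbf{e}_{x_1},\dots,\mathbf{e}_{x_T})$. Loss $l=\frac12\|\mathbf{e}_{x_o}-\mathbf{V}\mathbf{X}\mathbf{A}\mathbf{e}_{x_{T+1}}\|^2$, $\mathbf{a}^{(k)}$ the $k$-th column of $\mathbf{A}$. Preconditioned gradients: $\hat\nabla_{\mathbf{V}}l=(\mathbf{I}_N-\mathbf{1}_N\mathbf{1}_N^\top/N)(\nabla_{\mathbf{V}}l)\operatorname{diag}(1/\boldsymbol\mu)(\mathbf{I}_N-\boldsymbol\mu\boldsymbol\mu^\top/\|\boldsymbol\mu\|^2)$ and $\hat\nabla_{\mathbf{a}^{(k)}}l=\frac{1}{\mu_k}(\mathbf{I}_T-\mathbf{1}_T\mathbf{1}_T^\top/T)\nabla_{\mathbf{a}^{(k)}}l$. $\mathbb{E}$ is expectation over the data with $\mathbf{V},\mathbf{A}$ fixed. $\langle\mathbf{M},\mathbf{M}'\rangle_\mu=\operatorname{Tr}(\mathbf{M}\operatorname{diag}(\boldsymbol\mu)\mathbf{M}'^\top)$,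 $\|\mathbf{M}\|_\mu^2=\langle\mathbf{M},\mathbf{M}\rangle_\mu$; $\|\boldsymbol\mu\|$ Euclidean. *)

theory Defs
  imports "HOL-Analysis.Analysis"
begin

text \<open>Matrices are rendered as real^'c^'r (r rows, c columns; entry M $ i $ j).
  The index type 'n stands for [N], the index type 't for [T].\<close>

definition ones :: "real^'a" where "ones = (\<chi> i. 1)"

definition outer :: "real^'a \<Rightarrow> real^'b \<Rightarrow> real^'b^'a" where
  "outer u v = (\<chi> i j. u $ i * v $ j)"

definition diagm :: "real^'a \<Rightarrow> real^'a^'a" where
  "diagm v = (\<chi> i j. if i = j then v $ i else 0)"

text \<open>Gradient w.r.t. the Euclidean (Frobenius for matrices) inner product.\<close>
definition grad :: "('v::real_inner \<Rightarrow> real) \<Rightarrow> 'v \<Rightarrow> 'v" where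
  "grad f x = (SOME g. (f has_derivative (\<lambda>h. inner g h)) (at x))"

text \<open>Data matrix X = (e_{x_1},...,e_{x_T}), N x T.\<close>
definition datamat :: "('t \<Rightarrow> 'n) \<Rightarrow> real^'t^'n" where
  "datamat xs = (\<chi> i t. if xs t = i then 1 else 0)"

text \<open>Loss l = 1/2 || e_{x_o} - V X A e_{x_{T+1}} ||^2, with x_{T+1} = y, x_o = z.\<close>
definition loss :: "real^'n^'n \<Rightarrow> real^'n^'t \<Rightarrow> ('t::finite \<Rightarrow> 'n::finite) \<Rightarrow> 'n \<Rightarrow> 'n \<Rightarrow> real" where
  "loss V A xs y z = (1/2) * (norm (axis z 1 - (V ** datamat xs ** A) *v axis y 1))\<^sup>2"

definition set_col :: "real^'n^'t \<Rightarrow> 'n \<Rightarrow> real^'t \<Rightarrow> real^'n^'t" where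
  "set_col A k a = (\<chi> t j. if j = k then a $ t else A $ t $ j)"

definition hat_grad_V :: "real^'n \<Rightarrow> real^'n^'n \<Rightarrow> real^'n^'t \<Rightarrow> ('t::finite \<Rightarrow> 'n::finite) \<Rightarrow> 'n \<Rightarrow> 'n \<Rightarrow> real^'n^'n" where
  "hat_grad_V mu V A xs y z =
     (mat 1 - (1 / real CARD('n)) *\<^sub>R outer ones ones)
     ** grad (\<lambda>W. loss W A xs y z) V
     ** diagm (\<chi> i. 1 / mu $ i)
     ** (mat 1 - (1 / (norm mu)\<^sup>2) *\<^sub>R outer mu mu)"

definition hat_grad_a :: "real^'n \<Rightarrow> real^'n^'n \<Rightarrow> real^'n^'t \<Rightarrow> 'n \<Rightarrow> ('t::finite \<Rightarrow> 'n::finite) \<Rightarrow> 'n \<Rightarrow> 'n \<Rightarrow> real^'t" where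
  "hat_grad_a mu V A k xs y z =
     (1 / mu $ k) *\<^sub>R ((mat 1 - (1 / real CARD('t)) *\<^sub>R outer ones ones)
       *v grad (\<lambda>a. loss V (set_col A k a) xs y z) (column k A))"

text \<open>Expectation over the data: x_1..x_T, x_{T+1} i.i.d. with law mu, and
  Pr(x_o = z | x_{T+1} = y, xs) = sum_t Q_{t,y} P_{z, x_t}.\<close>
definition expect :: "real^'n \<Rightarrow> real^'n^'n \<Rightarrow> real^'n^'t
    \<Rightarrow> (('t::finite \<Rightarrow> 'n::finite) \<Rightarrow> 'n \<Rightarrow> 'n \<Rightarrow> 'v::real_vector) \<Rightarrow> 'v" where
  "expect mu P Q f = (\<Sum>xs\<in>UNIV. \<Sum>y\<in>UNIV. \<Sum>z\<in>UNIV.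
      ((\<Prod>t\<in>UNIV. mu $ (xs t)) * mu $ y * (\<Sum>t\<in>UNIV. Q $ t $ y * P $ z $ (xs t)))
      *\<^sub>R f xs y z)"

definition mu_inner :: "real^'n \<Rightarrow> real^'n^'m \<Rightarrow> real^'n^'m \<Rightarrow> real" where
  "mu_inner mu M M' = trace (M ** diagm mu ** transpose M')"

end

theory Submission
  imports Defs
begin

text \<open>Both gradients are affine in the one-hot target \<open>e(x\<^sub>o)\<close>, whose conditional mean given
  the context is \<open>P X q\<^sub>y\<close> (with \<open>y = x\<^sub>T\<^sub>+\<^sub>1\<close>), so averaging over \<open>x\<^sub>o\<close> replaces \<open>e(x\<^sub>o)\<close>
  by \<open>P X q\<^sub>y\<close>. What remains are two second moments of the one-hot data matrix \<open>X\<close> under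
  i.i.d. tokens,
  \<open>E[X c (X d)\<^sup>T] = <c,d> (diag \<mu> - \<mu> \<mu>\<^sup>T) + (1\<^sup>T c)(1\<^sup>T d) \<mu> \<mu>\<^sup>T\<close> and
  \<open>E[X\<^sup>T M X] = (tr (M diag \<mu>) - \<mu>\<^sup>T M \<mu>) I + (\<mu>\<^sup>T M \<mu>) 1 1\<^sup>T\<close>,
  because two distinct tokens are independent while a token paired with itself only sees the
  diagonal. Column-stochasticity and stationarity (\<open>V \<mu> = P \<mu> = \<mu>\<close>) make the rank-one
  \<open>\<mu>\<close>-terms cancel between the \<open>V\<close>- and the \<open>P\<close>-part. The expected \<open>V\<close>-gradient is then
  \<open>G diag \<mu>\<close> with \<open>G\<close> having zero column sums and \<open>G \<mu> = 0\<close>, so the preconditioners return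
  exactly \<open>G\<close>.\<close>

section \<open>Matrix identities\<close>

lemma linear_matrix_mult_left: "linear (\<lambda>B::real^'n::finite^'k::finite. M ** B)"
  by (rule linearI) (simp_all add: matrix_add_ldistrib matrix_scalar_ac scalar_matrix_assoc)

lemma linear_matrix_mult_right: "linear (\<lambda>A::real^'k::finite^'m::finite. A ** M)"
  by (rule linearI) (simp_all add: vec_eq_iff matrix_matrix_mult_def sum.distrib
      sum_distrib_left algebra_simps)

lemma bounded_linear_matrix_vector_mult_left:
  "bounded_linear (\<lambda>M::real^'n::finite^'m::finite. M *v x)"
proof -
  have "linear (\<lambda>M::real^'n^'m. M *v x)"
    by (rule linearI) (simp_all add: vec_eq_iff matrix_vector_mult_def sum.distrib
        sum_distrib_left algebra_simps)
  then show ?thesis by (simp add: linear_conv_bounded_linear)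
qed

lemma linear_outer_left: "linear (\<lambda>u. outer u v)"
  by (rule linearI) (simp_all add: vec_eq_iff outer_def algebra_simps)

lemma matrix_mult_outer: "M ** outer u v = outer (M *v u) v"
  by (simp add: vec_eq_iff matrix_matrix_mult_def matrix_vector_mult_def outer_def
      sum_distrib_right mult.assoc)

lemma outer_matrix_mult: "outer u v ** M = outer u (v v* M)"
  by (simp add: vec_eq_iff matrix_matrix_mult_def vector_matrix_mult_def outer_def
      sum_distrib_left mult.assoc)

lemma outer_mult_vec: "outer u v *v x = inner v x *\<^sub>R u"
  by (simp add: vec_eq_iff outer_def matrix_vector_mult_def inner_vec_def sum_distrib_left mult_ac)

lemma outer_ones_mult_diagm: "outer u ones ** diagm v = outer u v"
  by (simp add: vec_eq_iff matrix_matrix_mult_def outer_def ones_def diagm_def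
      if_distrib if_distribR sum.delta' cong: if_cong)

lemma diagm_mult: "diagm (u::real^'n::finite) ** diagm v = diagm (\<chi> i. u $ i * v $ i)"
proof -
  have entry: "(if i = k then u $ i else 0) * (if k = j then v $ k else 0)
      = (if k = i then (if i = j then u $ i * v $ i else 0) else 0)" for i j k
    by auto
  show ?thesis
    unfolding vec_eq_iff matrix_matrix_mult_def diagm_def vec_lambda_beta entry by simp
qed

lemma diagm_mult_inverse:
  assumes "\<forall>i. mu $ i \<noteq> 0"
  shows "diagm mu ** diagm (\<chi> i. 1 / mu $ i) = mat 1"
  using assms unfolding diagm_mult by (simp add: vec_eq_iff diagm_def mat_def)

lemma inner_matrix_vector_mult_outer: "inner r (M *v x) = inner (outer r x) M"
  by (simp add: inner_vec_def matrix_vector_mult_def outer_def sum_distrib_left ac_simps)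

lemma inner_transpose_mult_vec:
  fixes M :: "real^'n::finite^'m::finite" and N :: "real^'k::finite^'m"
  shows "inner u ((transpose M ** N) *v v) = inner (M *v u) (N *v v)"
proof -
  have "inner u ((transpose M ** N) *v v) = inner ((N *v v) v* M) u"
    by (simp only: matrix_vector_mul_assoc[symmetric] transpose_matrix_vector inner_commute)
  also have "\<dots> = inner (N *v v) (M *v u)"
    by (rule dot_lmul_matrix)
  finally show ?thesis
    by (simp add: inner_commute)
qed

lemma column_sum_matrix_mult:
  fixes M :: "real^'k::finite^'m::finite" and N :: "real^'n::finite^'k"
  assumes "\<forall>j. (\<Sum>i\<in>UNIV. M $ i $ j) = 1" and "\<forall>j. (\<Sum>i\<in>UNIV. N $ i $ j) = 1"
  shows "(\<Sum>i\<in>UNIV. (M ** N) $ i $ j) = 1"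
proof -
  have "(\<Sum>i\<in>UNIV. (M ** N) $ i $ j) = (\<Sum>l\<in>UNIV. (\<Sum>i\<in>UNIV. M $ i $ l) * N $ l $ j)"
    unfolding matrix_matrix_mult_def vec_lambda_beta sum_distrib_right by (rule sum.swap)
  then show ?thesis
    using assms by simp
qed

lemma mu_inner_eq_diag: "mu_inner mu M M' = (\<Sum>j\<in>UNIV. mu $ j * (transpose M ** M') $ j $ j)"
proof -
  have "mu_inner mu M M' = (\<Sum>i\<in>UNIV. \<Sum>j\<in>UNIV. M $ i $ j * mu $ j * M' $ i $ j)"
    unfolding mu_inner_def trace_def
    by (simp add: matrix_matrix_mult_def diagm_def transpose_def if_distrib if_distribR sum.delta'
        cong: if_cong)
  also have "\<dots> = (\<Sum>j\<in>UNIV. \<Sum>i\<in>UNIV. M $ i $ j * mu $ j * M' $ i $ j)"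
    by (rule sum.swap)
  finally show ?thesis
    by (simp add: matrix_matrix_mult_def transpose_def sum_distrib_left mult_ac)
qed

lemma mu_inner_columns: "mu_inner mu M M' = (\<Sum>j\<in>UNIV. mu $ j * inner (column j M) (column j M'))"
  by (simp add: mu_inner_eq_diag matrix_matrix_mult_def transpose_def column_def inner_vec_def)

lemma centering_matrix_mult:
  fixes G :: "real^'n::finite^'m::finite"
  assumes "\<forall>j. (\<Sum>i\<in>UNIV. G $ i $ j) = 0"
  shows "(mat 1 - c *\<^sub>R outer ones ones) ** G = G"
proof -
  have "ones v* G = 0"
    using assms by (simp add: vec_eq_iff vector_matrix_mult_def ones_def)
  then have "(outer ones ones :: real^'m^'m) ** G = 0"
    unfolding outer_matrix_mult by (simp add: vec_eq_iff outer_def)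
  then show ?thesis
    by (simp add: linear_diff[OF linear_matrix_mult_right] scalar_matrix_assoc[symmetric])
qed

lemma centering_mult_vec:
  "(mat 1 - c *\<^sub>R outer ones ones) *v v = v - (c * (\<Sum>i\<in>UNIV. v $ i)) *\<^sub>R ones"
  by (simp add: matrix_vector_mult_diff_rdistrib outer_mult_vec inner_vec_def ones_def
      flip: scaleR_matrix_vector_assoc)

lemma matrix_mult_projection:
  assumes "G *v u = 0"
  shows "G ** (mat 1 - c *\<^sub>R outer u u) = G"
proof -
  have "G ** outer u u = 0"
    unfolding matrix_mult_outer assms by (simp add: vec_eq_iff outer_def)
  then show ?thesis
    by (simp add: linear_diff[OF linear_matrix_mult_left] linear_scale[OF linear_matrix_mult_left])
qed

lemma sum_sum_if_eq:
  fixes c d :: "'a::finite \<Rightarrow> real"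
  shows "(\<Sum>t\<in>UNIV. \<Sum>s\<in>UNIV. c t * d s * (if t = s then \<alpha> else \<beta>))
    = (\<alpha> - \<beta>) * (\<Sum>t\<in>UNIV. c t * d t) + \<beta> * sum c UNIV * sum d UNIV"
proof -
  have "(\<Sum>t\<in>UNIV. \<Sum>s\<in>UNIV. c t * d s * (if t = s then \<alpha> else \<beta>))
      = (\<Sum>t\<in>UNIV. \<Sum>s\<in>UNIV. (if t = s then (\<alpha> - \<beta>) * (c t * d s) else 0) + \<beta> * (c t * d s))"
    by (intro sum.cong refl) (simp add: algebra_simps)
  then show ?thesis
    by (simp add: sum.distrib sum_distrib_left sum_product mult_ac)
qed

text \<open>Averaging a one-hot vector over its law \<open>w\<close> gives \<open>w\<close>.\<close>

lemma sum_weighted_residual: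
  assumes "linear L" and "(\<Sum>z\<in>UNIV. w $ z) = 1"
  shows "(\<Sum>z\<in>UNIV. w $ z *\<^sub>R L (c - axis z 1)) = L (c - w)"
proof -
  have "(\<Sum>z\<in>UNIV. w $ z *\<^sub>R (c - axis z 1)) = c - w"
    using assms(2) basis_expansion[of w]
    by (simp add: scaleR_diff_right sum_subtractf scalar_mult_eq_scaleR flip: scaleR_sum_left)
  then show ?thesis
    by (simp add: linear_sum[OF assms(1), symmetric] linear_scale[OF assms(1), symmetric])
qed

section \<open>Gradients of the loss\<close>

lemma grad_eqI:
  fixes g :: "'v::real_inner"
  assumes "(f has_derivative (\<lambda>h. inner g h)) (at x)"
  shows "grad f x = g"
  unfolding grad_def
proof (rule some_equality)
  fix g' assume "(f has_derivative inner g') (at x)"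
  then have "inner g' = inner g"
    using has_derivative_unique assms by (metis (no_types))
  then have "inner (g' - g) (g' - g) = 0"
    by (simp add: inner_diff_left)
  then show "g' = g" by simp
qed (use assms in \<open>simp add: fun_eq_iff\<close>)

lemma grad_half_norm_sq_residual:
  assumes "bounded_linear L" and adjoint: "\<And>d. inner (L w - c) (L d) = inner g d"
  shows "grad (\<lambda>w. (1/2) * (norm (c - L w))\<^sup>2) w = g"
proof (rule grad_eqI)
  interpret L: bounded_linear L by fact
  have "((\<lambda>w. (1/2) * inner (c - L w) (c - L w)) has_derivative
     (\<lambda>d. (1/2) * (inner (c - L w) (0 - L d) + inner (0 - L d) (c - L w)))) (at w)"
    by (intro derivative_intros L.has_derivative)
  moreover have "(1/2) * (inner (c - L w) (0 - L d) + inner (0 - L d) (c - L w)) = inner g d" for d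
    using adjoint[of d] by (simp add: inner_commute inner_diff_left inner_diff_right)
  ultimately show "((\<lambda>w. (1/2) * (norm (c - L w))\<^sup>2) has_derivative inner g) (at w)"
    by (simp add: power2_norm_eq_inner)
qed

lemma loss_eq_residual:
  "loss V A xs y z = (1/2) * (norm (axis z 1 - V *v (datamat xs *v column y A)))\<^sup>2"
  unfolding loss_def matrix_vector_mul_assoc[symmetric] by (simp only: matrix_vector_mult_basis)

lemma grad_loss_V:
  "grad (\<lambda>W. loss W A xs y z) V
    = outer (V *v (datamat xs *v column y A) - axis z 1) (datamat xs *v column y A)"
  unfolding loss_eq_residual
  by (rule grad_half_norm_sq_residual[OF bounded_linear_matrix_vector_mult_left])
    (rule inner_matrix_vector_mult_outer)

lemma grad_loss_column:
  "grad (\<lambda>a. loss V (set_col A k a) xs y z) (column k A)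
    = (if y = k then transpose (V ** datamat xs) *v ((V ** datamat xs) *v column k A - axis z 1)
       else 0)"
proof (cases "y = k")
  case True
  let ?M = "V ** datamat xs"
  have "column k (set_col A k a) = a" for a
    by (simp add: vec_eq_iff set_col_def column_def)
  then have "(\<lambda>a. loss V (set_col A k a) xs y z) = (\<lambda>a. (1/2) * (norm (axis z 1 - ?M *v a))\<^sup>2)"
    using True by (simp add: loss_eq_residual matrix_vector_mul_assoc)
  moreover have "grad (\<lambda>a. (1/2) * (norm (axis z 1 - ?M *v a))\<^sup>2) (column k A)
      = transpose ?M *v (?M *v column k A - axis z 1)"
    by (rule grad_half_norm_sq_residual) (simp_all add: dot_lmul_matrix)
  ultimately show ?thesis
    using True by simp
next
  case False
  then have "column y (set_col A k a) = column y A" for a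
    by (simp add: vec_eq_iff set_col_def column_def)
  with False show ?thesis
    unfolding loss_eq_residual by (simp add: grad_eqI)
qed

section \<open>Moments of the one-hot data matrix\<close>

definition iid_mean :: "real^'n \<Rightarrow> (('t::finite \<Rightarrow> 'n::finite) \<Rightarrow> 'v::real_vector) \<Rightarrow> 'v" where
  "iid_mean mu F = (\<Sum>xs\<in>UNIV. (\<Prod>u\<in>UNIV. mu $ xs u) *\<^sub>R F xs)"

lemma iid_mean_linear:
  assumes "linear L"
  shows "iid_mean mu (\<lambda>xs. L (F xs)) = L (iid_mean mu F)"
  unfolding iid_mean_def using assms by (simp add: linear_sum linear_scale)

lemma iid_mean_sum: "iid_mean mu (\<lambda>xs. \<Sum>i\<in>I. F i xs) = (\<Sum>i\<in>I. iid_mean mu (F i))"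
  unfolding iid_mean_def by (simp add: scaleR_sum_right sum.swap[of _ I])

lemma iid_mean_diff: "iid_mean mu (\<lambda>xs. F xs - G xs) = iid_mean mu F - iid_mean mu G"
  unfolding iid_mean_def by (simp add: scaleR_diff_right sum_subtractf)

lemma iid_mean_scale:
  fixes F :: "('t::finite \<Rightarrow> 'n::finite) \<Rightarrow> real"
  shows "iid_mean mu (\<lambda>xs. r * F xs) = r * iid_mean mu F"
  unfolding iid_mean_def by (simp add: sum_distrib_left mult_ac real_scaleR_def)

lemma iid_mean_zero: "iid_mean mu (\<lambda>xs. 0) = 0"
  by (simp add: iid_mean_def)

lemma iid_mean_component: "iid_mean mu F $ i = iid_mean mu (\<lambda>xs. F xs $ i)"
  unfolding iid_mean_def by simp

lemma iid_mean_prod: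
  "iid_mean mu (\<lambda>xs::'t::finite \<Rightarrow> 'n::finite. \<Prod>u\<in>UNIV. w u (xs u))
     = (\<Prod>u\<in>UNIV. \<Sum>i\<in>UNIV. mu $ i * w u i)"
  unfolding iid_mean_def
  using prod_sum_PiE[of "UNIV::'t set" "\<lambda>_. UNIV::'n set" "\<lambda>u i. mu $ i * w u i"]
  by (simp add: prod.distrib)

lemma iid_mean_mult_coordinates:
  fixes f g :: "'n::finite \<Rightarrow> real"
  assumes "(\<Sum>i\<in>UNIV. mu $ i) = 1"
  shows "iid_mean mu (\<lambda>xs::'t::finite \<Rightarrow> 'n. f (xs t) * g (xs s))
    = (if t = s then (\<Sum>i\<in>UNIV. mu $ i * f i * g i)
       else (\<Sum>i\<in>UNIV. mu $ i * f i) * (\<Sum>i\<in>UNIV. mu $ i * g i))"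
proof -
  \<comment> \<open>the integrand as a product over all coordinates, which also covers \<open>t = s\<close>\<close>
  define w where "w u i = (if u = t then f i else 1) * (if u = s then g i else 1)" for u i
  have "f (xs t) * g (xs s) = (\<Prod>u\<in>UNIV. w u (xs u))" for xs :: "'t \<Rightarrow> 'n"
    by (simp add: w_def prod.distrib prod.delta)
  then have "iid_mean mu (\<lambda>xs::'t \<Rightarrow> 'n. f (xs t) * g (xs s))
      = (\<Prod>u\<in>UNIV. \<Sum>i\<in>UNIV. mu $ i * w u i)"
    by (simp add: iid_mean_prod)
  also have "\<dots> = (\<Prod>u\<in>UNIV.
      if u = t then \<Sum>i\<in>UNIV. mu $ i * f i * (if u = s then g i else 1)
      else if u = s then \<Sum>i\<in>UNIV. mu $ i * g i else 1)"
    by (intro prod.cong refl) (auto simp: w_def assms mult.assoc)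
  finally show ?thesis
    by (cases "t = s") (simp_all add: prod.If_cases Int_commute mult.assoc)
qed

lemma iid_mean_pair:
  fixes F :: "'n::finite \<Rightarrow> 'n \<Rightarrow> real"
  assumes "(\<Sum>i\<in>UNIV. mu $ i) = 1"
  shows "iid_mean mu (\<lambda>xs::'t::finite \<Rightarrow> 'n. F (xs t) (xs s))
    = (if t = s then (\<Sum>i\<in>UNIV. mu $ i * F i i)
       else (\<Sum>i\<in>UNIV. \<Sum>j\<in>UNIV. mu $ i * mu $ j * F i j))"
proof -
  have slice: "iid_mean mu (\<lambda>xs::'t \<Rightarrow> 'n. F (xs t) j * of_bool (xs s = j))
      = (if t = s then mu $ j * F j j else (\<Sum>i\<in>UNIV. mu $ i * F i j) * mu $ j)" for j
    using iid_mean_mult_coordinates[OF assms, where f = "\<lambda>i. F i j" and g = "\<lambda>i. of_bool (i = j)"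
        and t = t and s = s]
    by simp
  have "(\<lambda>xs::'t \<Rightarrow> 'n. F (xs t) (xs s)) = (\<lambda>xs. \<Sum>j\<in>UNIV. F (xs t) j * of_bool (xs s = j))"
    by simp
  then have "iid_mean mu (\<lambda>xs::'t \<Rightarrow> 'n. F (xs t) (xs s))
      = (\<Sum>j\<in>UNIV. if t = s then mu $ j * F j j else (\<Sum>i\<in>UNIV. mu $ i * F i j) * mu $ j)"
    by (simp only: iid_mean_sum slice)
  also have "\<dots> = (if t = s then (\<Sum>i\<in>UNIV. mu $ i * F i i)
       else (\<Sum>i\<in>UNIV. \<Sum>j\<in>UNIV. mu $ i * mu $ j * F i j))"
    by (subst sum.swap) (simp add: sum_distrib_left sum_distrib_right mult_ac)
  finally show ?thesis .
qed

lemma datamat_mult_vec_component: "(datamat xs *v c) $ a = (\<Sum>t\<in>UNIV. c $ t * of_bool (xs t = a))"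
  unfolding datamat_def matrix_vector_mult_def vec_lambda_beta
  by (rule sum.cong) (simp_all add: of_bool_def)

lemma datamat_quadratic_form: "(transpose (datamat xs) ** M ** datamat xs) $ t $ s = M $ xs t $ xs s"
  by (simp add: datamat_def matrix_matrix_mult_def transpose_def if_distrib if_distribR
      sum.delta sum.delta' cong: if_cong)

lemma column_sum_datamat: "(\<Sum>i\<in>UNIV. datamat xs $ i $ t) = 1"
  by (simp add: datamat_def)

lemma iid_mean_outer_datamat:
  fixes mu :: "real^'n::finite" and c d :: "real^'t::finite"
  assumes "(\<Sum>i\<in>UNIV. mu $ i) = 1"
  shows "iid_mean mu (\<lambda>xs::'t \<Rightarrow> 'n. outer (datamat xs *v c) (datamat xs *v d))
    = inner c d *\<^sub>R (diagm mu - outer mu mu)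
      + ((\<Sum>i\<in>UNIV. c $ i) * (\<Sum>i\<in>UNIV. d $ i)) *\<^sub>R outer mu mu"
proof -
  have delta: "(\<Sum>i\<in>UNIV. mu $ i * of_bool (i = a) * of_bool (i = b)) = mu $ a * of_bool (a = b)"
    for a b
    by (cases "a = b") simp_all
  have indicators: "iid_mean mu (\<lambda>xs::'t \<Rightarrow> 'n. of_bool (xs t = a) * of_bool (xs s = b))
      = (if t = s then mu $ a * of_bool (a = b) else mu $ a * mu $ b)" for t s a b
    using iid_mean_mult_coordinates[OF assms, where f = "\<lambda>i. of_bool (i = a)"
        and g = "\<lambda>i. of_bool (i = b)" and t = t and s = s]
    by (simp add: delta)
  have "iid_mean mu (\<lambda>xs::'t \<Rightarrow> 'n. outer (datamat xs *v c) (datamat xs *v d)) $ a $ b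
      = (\<Sum>t\<in>UNIV. \<Sum>s\<in>UNIV. c $ t * d $ s
          * (if t = s then mu $ a * of_bool (a = b) else mu $ a * mu $ b))" for a b
  proof -
    have "outer (datamat xs *v c) (datamat xs *v d) $ a $ b = (\<Sum>t\<in>UNIV. \<Sum>s\<in>UNIV.
        c $ t * d $ s * (of_bool (xs t = a) * of_bool (xs s = b)))" for xs :: "'t \<Rightarrow> 'n"
      unfolding outer_def vec_lambda_beta datamat_mult_vec_component sum_product by (simp only: mult_ac)
    then show ?thesis
      by (simp add: iid_mean_component iid_mean_sum iid_mean_scale indicators)
  qed
  also have "\<dots> a b = (mu $ a * of_bool (a = b) - mu $ a * mu $ b) * inner c d
      + mu $ a * mu $ b * (\<Sum>i\<in>UNIV. c $ i) * (\<Sum>i\<in>UNIV. d $ i)" for a b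
    by (simp only: sum_sum_if_eq inner_vec_def inner_real_def)
  finally show ?thesis
    by (simp add: vec_eq_iff diagm_def outer_def algebra_simps)
qed

lemma iid_mean_datamat_quadratic:
  fixes mu :: "real^'n::finite" and M :: "real^'n^'n"
  assumes "(\<Sum>i\<in>UNIV. mu $ i) = 1"
  shows "iid_mean mu (\<lambda>xs::'t::finite \<Rightarrow> 'n. transpose (datamat xs) ** M ** datamat xs)
    = ((\<Sum>i\<in>UNIV. mu $ i * M $ i $ i) - inner mu (M *v mu)) *\<^sub>R mat 1
      + inner mu (M *v mu) *\<^sub>R outer ones ones"
proof -
  have "inner mu (M *v mu) = (\<Sum>i\<in>UNIV. \<Sum>j\<in>UNIV. mu $ i * mu $ j * M $ i $ j)"
    by (simp add: inner_vec_def matrix_vector_mult_def sum_distrib_left mult_ac)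
  then have "iid_mean mu (\<lambda>xs::'t \<Rightarrow> 'n. M $ xs t $ xs s)
      = (if t = s then \<Sum>i\<in>UNIV. mu $ i * M $ i $ i else inner mu (M *v mu))" for t s
    using iid_mean_pair[OF assms, where F = "\<lambda>i j. M $ i $ j" and t = t and s = s] by simp
  then show ?thesis
    by (simp add: vec_eq_iff iid_mean_component datamat_quadratic_form mat_def outer_def ones_def)
qed

lemma iid_mean_outer_residual:
  fixes V P :: "real^'n::finite^'n" and a q :: "real^'t::finite"
  assumes mu_sum: "(\<Sum>i\<in>UNIV. mu $ i) = 1" and V_mu: "V *v mu = mu" and P_mu: "P *v mu = mu"
    and a_sum: "(\<Sum>i\<in>UNIV. a $ i) = 1" and q_sum: "(\<Sum>i\<in>UNIV. q $ i) = 1"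
  shows "iid_mean mu (\<lambda>xs::'t \<Rightarrow> 'n.
      outer (V *v (datamat xs *v a) - P *v (datamat xs *v q)) (datamat xs *v a))
    = (inner a a *\<^sub>R (V - outer mu ones) - inner q a *\<^sub>R (P - outer mu ones)) ** diagm mu"
proof -
  have moment: "M ** iid_mean mu (\<lambda>xs::'t \<Rightarrow> 'n. outer (datamat xs *v c) (datamat xs *v a))
      = inner c a *\<^sub>R ((M - outer mu ones) ** diagm mu) + outer mu mu"
    if "M *v mu = mu" and "(\<Sum>i\<in>UNIV. c $ i) = 1" for M :: "real^'n^'n" and c
    using that
    by (simp add: iid_mean_outer_datamat[OF mu_sum] a_sum matrix_mult_outer outer_ones_mult_diagm
        linear_add[OF linear_matrix_mult_left] linear_diff[OF linear_matrix_mult_left]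
        linear_scale[OF linear_matrix_mult_left] linear_diff[OF linear_matrix_mult_right])
  have split: "outer (V *v u - P *v v) w = V ** outer u w - P ** outer v w" for u v w
    by (simp add: matrix_mult_outer linear_diff[OF linear_outer_left])
  show ?thesis
    unfolding split
    by (simp add: iid_mean_diff iid_mean_linear[OF linear_matrix_mult_left] moment V_mu P_mu a_sum q_sum
        linear_diff[OF linear_matrix_mult_right] linear_scale[OF linear_matrix_mult_right] inner_commute)
qed

lemma iid_mean_transpose_residual:
  fixes V P :: "real^'n::finite^'n" and a q :: "real^'t::finite"
  assumes mu_sum: "(\<Sum>i\<in>UNIV. mu $ i) = 1" and V_mu: "V *v mu = mu" and P_mu: "P *v mu = mu"
    and a_sum: "(\<Sum>i\<in>UNIV. a $ i) = 1" and q_sum: "(\<Sum>i\<in>UNIV. q $ i) = 1"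
  shows "iid_mean mu (\<lambda>xs::'t \<Rightarrow> 'n.
      transpose (V ** datamat xs) *v ((V ** datamat xs) *v a - (P ** datamat xs) *v q))
    = (mu_inner mu V V - (norm mu)\<^sup>2) *\<^sub>R a - (mu_inner mu V P - (norm mu)\<^sup>2) *\<^sub>R q"
proof -
  have moment: "iid_mean mu (\<lambda>xs::'t \<Rightarrow> 'n. (transpose (datamat xs) ** (transpose V ** M) ** datamat xs) *v c)
      = (mu_inner mu V M - (norm mu)\<^sup>2) *\<^sub>R c + (norm mu)\<^sup>2 *\<^sub>R ones"
    if "M *v mu = mu" and "(\<Sum>i\<in>UNIV. c $ i) = 1" for M :: "real^'n^'n" and c
  proof -
    have "inner mu ((transpose V ** M) *v mu) = (norm mu)\<^sup>2"
      using that(1) by (simp add: inner_transpose_mult_vec V_mu power2_norm_eq_inner)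
    moreover have "inner ones c = 1"
      using that(2) by (simp add: inner_vec_def ones_def)
    ultimately show ?thesis
      by (simp add: iid_mean_linear[OF bounded_linear.linear[OF bounded_linear_matrix_vector_mult_left]]
          iid_mean_datamat_quadratic[OF mu_sum] mu_inner_eq_diag outer_mult_vec
          matrix_vector_mult_add_rdistrib algebra_simps flip: scaleR_matrix_vector_assoc)
  qed
  have split: "transpose (V ** X) *v ((V ** X) *v a - (P ** X) *v q)
      = (transpose X ** (transpose V ** V) ** X) *v a - (transpose X ** (transpose V ** P) ** X) *v q"
    for X :: "real^'t^'n"
    by (simp add: matrix_vector_mult_diff_distrib matrix_transpose_mul matrix_mul_assoc
        matrix_vector_mul_assoc del: transpose_matrix_vector)
  show ?thesis
    unfolding split by (simp add: iid_mean_diff moment V_mu P_mu a_sum q_sum)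
qed

section \<open>Expected preconditioned gradients\<close>

lemma expect_linear:
  assumes "linear L"
  shows "expect mu P Q (\<lambda>xs y z. L (f xs y z)) = L (expect mu P Q f)"
  unfolding expect_def using assms by (simp add: linear_sum linear_scale)

lemma column_mult_datamat: "column y (P ** datamat xs ** Q) = P *v (datamat xs *v column y Q)"
  by (simp add: matrix_vector_mul_assoc matrix_mul_assoc flip: matrix_vector_mult_basis)

lemma sum_conditional_law:
  assumes "\<forall>j. (\<Sum>i\<in>UNIV. P $ i $ j) = 1" and "\<forall>k. (\<Sum>t\<in>UNIV. Q $ t $ k) = 1"
  shows "(\<Sum>z\<in>UNIV. (P *v (datamat xs *v column y Q)) $ z) = 1"
  unfolding column_mult_datamat[symmetric]
  using column_sum_matrix_mult[OF allI[OF column_sum_matrix_mult[OF assms(1) allI[OF column_sum_datamat]]]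
      assms(2)]
  by (simp add: column_def)

text \<open>The column \<open>column y (P ** datamat xs ** Q)\<close> is the conditional law of \<open>x\<^sub>o\<close> given the
  context \<open>xs\<close> and \<open>x\<^sub>T\<^sub>+\<^sub>1 = y\<close>.\<close>

lemma expect_eq_iid_mean:
  "expect mu P Q f = (\<Sum>y\<in>UNIV. mu $ y *\<^sub>R
     iid_mean mu (\<lambda>xs. \<Sum>z\<in>UNIV. column y (P ** datamat xs ** Q) $ z *\<^sub>R f xs y z))"
proof -
  have PX: "(P ** datamat xs) $ z $ t = P $ z $ xs t" for xs z t
    by (simp add: matrix_matrix_mult_def datamat_def if_distrib if_distribR sum.delta' cong: if_cong)
  have law: "column y (P ** datamat xs ** Q) $ z = (\<Sum>t\<in>UNIV. Q $ t $ y * P $ z $ xs t)"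
    for xs y z
    unfolding column_def matrix_matrix_mult_def[of "P ** datamat xs"] vec_lambda_beta PX
    by (simp only: mult.commute)
  show ?thesis
    unfolding expect_def iid_mean_def law
    by (subst sum.swap) (simp add: scaleR_sum_right mult_ac)
qed

lemma expect_grad_V:
  fixes P V :: "real^'n::finite^'n" and Q A :: "real^'n^'t::finite"
  assumes mu_sum: "(\<Sum>i\<in>UNIV. mu $ i) = 1"
    and P_col: "\<forall>j. (\<Sum>i\<in>UNIV. P $ i $ j) = 1" and Q_col: "\<forall>k. (\<Sum>t\<in>UNIV. Q $ t $ k) = 1"
    and A_col: "\<forall>k. (\<Sum>t\<in>UNIV. A $ t $ k) = 1"
    and V_mu: "V *v mu = mu" and P_mu: "P *v mu = mu"
  shows "expect mu P Q (\<lambda>xs y z. grad (\<lambda>W. loss W A xs y z) V)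
    = (mu_inner mu A A *\<^sub>R (V - outer mu ones) - mu_inner mu Q A *\<^sub>R (P - outer mu ones)) ** diagm mu"
proof -
  have "expect mu P Q (\<lambda>xs y z. grad (\<lambda>W. loss W A xs y z) V)
      = (\<Sum>y\<in>UNIV. mu $ y *\<^sub>R iid_mean mu (\<lambda>xs::'t \<Rightarrow> 'n.
          outer (V *v (datamat xs *v column y A) - P *v (datamat xs *v column y Q))
            (datamat xs *v column y A)))"
    unfolding expect_eq_iid_mean column_mult_datamat grad_loss_V
      sum_weighted_residual[OF linear_outer_left sum_conditional_law[OF P_col Q_col]] ..
  also have "\<dots> = (\<Sum>y\<in>UNIV. mu $ y *\<^sub>R ((inner (column y A) (column y A) *\<^sub>R (V - outer mu ones)
      - inner (column y Q) (column y A) *\<^sub>R (P - outer mu ones)) ** diagm mu))"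
    using A_col Q_col by (simp add: iid_mean_outer_residual[OF mu_sum V_mu P_mu] column_def)
  also have "\<dots> = (mu_inner mu A A *\<^sub>R (V - outer mu ones) - mu_inner mu Q A *\<^sub>R (P - outer mu ones))
      ** diagm mu"
    by (simp add: mu_inner_columns linear_sum[OF linear_matrix_mult_right]
        linear_scale[OF linear_matrix_mult_right] scaleR_diff_right sum_subtractf scaleR_sum_left
        flip: linear_sum[OF linear_matrix_mult_right] linear_scale[OF linear_matrix_mult_right])
  finally show ?thesis .
qed

lemma expect_grad_column:
  fixes P V :: "real^'n::finite^'n" and Q A :: "real^'n^'t::finite"
  assumes mu_sum: "(\<Sum>i\<in>UNIV. mu $ i) = 1"
    and P_col: "\<forall>j. (\<Sum>i\<in>UNIV. P $ i $ j) = 1" and Q_col: "\<forall>k. (\<Sum>t\<in>UNIV. Q $ t $ k) = 1"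
    and A_col: "\<forall>k. (\<Sum>t\<in>UNIV. A $ t $ k) = 1"
    and V_mu: "V *v mu = mu" and P_mu: "P *v mu = mu"
  shows "expect mu P Q (\<lambda>xs y z. grad (\<lambda>a. loss V (set_col A k a) xs y z) (column k A))
    = mu $ k *\<^sub>R ((mu_inner mu V V - (norm mu)\<^sup>2) *\<^sub>R column k A
        - (mu_inner mu V P - (norm mu)\<^sup>2) *\<^sub>R column k Q)"
proof -
  let ?G = "\<lambda>xs z. transpose (V ** datamat xs) *v ((V ** datamat xs) *v column k A - axis z 1)"
  have only_k: "iid_mean mu (\<lambda>xs. \<Sum>z\<in>UNIV. (P *v (datamat xs *v column y Q)) $ z *\<^sub>R
        (if y = k then ?G xs z else 0))
      = (if y = k then iid_mean mu (\<lambda>xs. \<Sum>z\<in>UNIV. (P *v (datamat xs *v column k Q)) $ z *\<^sub>R ?G xs z)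
         else 0)" for y
    by (cases "y = k") (simp_all add: iid_mean_zero)
  have "expect mu P Q (\<lambda>xs y z. grad (\<lambda>a. loss V (set_col A k a) xs y z) (column k A))
      = mu $ k *\<^sub>R iid_mean mu (\<lambda>xs::'t \<Rightarrow> 'n. \<Sum>z\<in>UNIV. (P *v (datamat xs *v column k Q)) $ z *\<^sub>R ?G xs z)"
    unfolding expect_eq_iid_mean column_mult_datamat grad_loss_column only_k
    by (simp add: if_distrib[of "\<lambda>v. _ *\<^sub>R v"] cong: if_cong)
  also have "\<dots> = mu $ k *\<^sub>R iid_mean mu (\<lambda>xs::'t \<Rightarrow> 'n.
      transpose (V ** datamat xs) *v ((V ** datamat xs) *v column k A - (P ** datamat xs) *v column k Q))"
  proof -
    have "(\<Sum>z\<in>UNIV. (P *v (datamat xs *v column k Q)) $ z *\<^sub>R ?G xs z)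
        = transpose (V ** datamat xs) *v ((V ** datamat xs) *v column k A - (P ** datamat xs) *v column k Q)"
      for xs :: "'t \<Rightarrow> 'n"
      using sum_weighted_residual[OF matrix_vector_mul_linear[of "transpose (V ** datamat xs)"]
          sum_conditional_law[OF P_col Q_col]]
      by (simp add: matrix_vector_mul_assoc)
    then show ?thesis
      by simp
  qed
  also have "\<dots> = mu $ k *\<^sub>R ((mu_inner mu V V - (norm mu)\<^sup>2) *\<^sub>R column k A
        - (mu_inner mu V P - (norm mu)\<^sup>2) *\<^sub>R column k Q)"
    using A_col Q_col
    by (simp add: iid_mean_transpose_residual[OF mu_sum V_mu P_mu] column_def
        del: transpose_matrix_vector)
  finally show ?thesis .
qed

lemma expect_hat_grad_V:
  fixes P V :: "real^'n::finite^'n" and Q A :: "real^'n^'t::finite"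
  assumes mu_pos: "\<forall>i. mu $ i > 0" and mu_sum: "(\<Sum>i\<in>UNIV. mu $ i) = 1"
    and P_col: "\<forall>j. (\<Sum>i\<in>UNIV. P $ i $ j) = 1" and Q_col: "\<forall>k. (\<Sum>t\<in>UNIV. Q $ t $ k) = 1"
    and V_col: "\<forall>j. (\<Sum>i\<in>UNIV. V $ i $ j) = 1" and A_col: "\<forall>k. (\<Sum>t\<in>UNIV. A $ t $ k) = 1"
    and V_mu: "V *v mu = mu" and P_mu: "P *v mu = mu"
  shows "expect mu P Q (hat_grad_V mu V A)
    = mu_inner mu A A *\<^sub>R (V - outer mu ones) - mu_inner mu Q A *\<^sub>R (P - outer mu ones)"
    (is "_ = ?G")
proof -
  let ?C = "mat 1 - (1 / real CARD('n)) *\<^sub>R outer ones ones :: real^'n^'n"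
  let ?D = "diagm (\<chi> i. 1 / mu $ i) :: real^'n^'n"
  let ?\<Pi> = "mat 1 - (1 / (norm mu)\<^sup>2) *\<^sub>R outer mu mu :: real^'n^'n"
  have "expect mu P Q (hat_grad_V mu V A)
      = ?C ** expect mu P Q (\<lambda>xs y z. grad (\<lambda>W. loss W A xs y z) V) ** ?D ** ?\<Pi>"
    unfolding hat_grad_V_def
    using expect_linear[OF linear_compose[OF linear_compose[OF
          linear_matrix_mult_left[of ?C] linear_matrix_mult_right[of ?D]] linear_matrix_mult_right[of ?\<Pi>]]]
    by (simp add: o_def)
  also have "\<dots> = ?C ** ?G ** ?\<Pi>"
  proof -
    have "diagm mu ** ?D = mat 1"
      using mu_pos by (intro diagm_mult_inverse) (simp add: less_imp_neq[symmetric])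
    then show ?thesis
      by (simp add: expect_grad_V[OF mu_sum P_col Q_col A_col V_mu P_mu] matrix_mul_assoc[symmetric])
  qed
  also have "?C ** ?G = ?G"
  proof (rule centering_matrix_mult, intro allI)
    fix j
    have "(\<Sum>i\<in>UNIV. ?G $ i $ j)
        = mu_inner mu A A * ((\<Sum>i\<in>UNIV. V $ i $ j) - (\<Sum>i\<in>UNIV. mu $ i))
          - mu_inner mu Q A * ((\<Sum>i\<in>UNIV. P $ i $ j) - (\<Sum>i\<in>UNIV. mu $ i))"
      by (simp add: outer_def ones_def sum_subtractf right_diff_distrib sum_distrib_left)
    then show "(\<Sum>i\<in>UNIV. ?G $ i $ j) = 0"
      using V_col P_col mu_sum by simp
  qed
  also have "?G ** ?\<Pi> = ?G"
  proof (rule matrix_mult_projection)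
    have "(M - outer mu ones) *v mu = 0" if "M *v mu = mu" for M :: "real^'n^'n"
      using that mu_sum
      by (simp add: matrix_vector_mult_diff_rdistrib outer_mult_vec inner_vec_def ones_def)
    then show "?G *v mu = 0"
      using V_mu P_mu
      by (simp add: matrix_vector_mult_diff_rdistrib flip: scaleR_matrix_vector_assoc)
  qed
  finally show ?thesis .
qed

lemma expect_hat_grad_a:
  fixes P V :: "real^'n::finite^'n" and Q A :: "real^'n^'t::finite"
  assumes mu_pos: "\<forall>i. mu $ i > 0" and mu_sum: "(\<Sum>i\<in>UNIV. mu $ i) = 1"
    and P_col: "\<forall>j. (\<Sum>i\<in>UNIV. P $ i $ j) = 1" and Q_col: "\<forall>k. (\<Sum>t\<in>UNIV. Q $ t $ k) = 1"
    and A_col: "\<forall>k. (\<Sum>t\<in>UNIV. A $ t $ k) = 1"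
    and V_mu: "V *v mu = mu" and P_mu: "P *v mu = mu"
  shows "expect mu P Q (hat_grad_a mu V A k)
    = (mu_inner mu V V - (norm mu)\<^sup>2) *\<^sub>R (column k A - (1 / real CARD('t)) *\<^sub>R ones)
      - (mu_inner mu V P - (norm mu)\<^sup>2) *\<^sub>R (column k Q - (1 / real CARD('t)) *\<^sub>R ones)"
proof -
  let ?C = "mat 1 - (1 / real CARD('t)) *\<^sub>R outer ones ones :: real^'t^'t"
  have "expect mu P Q (hat_grad_a mu V A k)
      = (1 / mu $ k) *\<^sub>R (?C *v expect mu P Q (\<lambda>xs y z. grad (\<lambda>a. loss V (set_col A k a) xs y z) (column k A)))"
    unfolding hat_grad_a_def
    using expect_linear[OF linear_compose[OF matrix_vector_mul_linear[of ?C]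
          linear_scale_self[of "1 / mu $ k"]]]
    by (simp add: o_def)
  also have "\<dots> = ?C *v ((mu_inner mu V V - (norm mu)\<^sup>2) *\<^sub>R column k A
        - (mu_inner mu V P - (norm mu)\<^sup>2) *\<^sub>R column k Q)"
    using mu_pos[rule_format, of k]
    by (simp add: expect_grad_column[OF mu_sum P_col Q_col A_col V_mu P_mu] matrix_vector_mult_scaleR)
  also have "\<dots> = (mu_inner mu V V - (norm mu)\<^sup>2) *\<^sub>R (column k A - (1 / real CARD('t)) *\<^sub>R ones)
      - (mu_inner mu V P - (norm mu)\<^sup>2) *\<^sub>R (column k Q - (1 / real CARD('t)) *\<^sub>R ones)"
  proof -
    have "?C *v column j M = column j M - (1 / real CARD('t)) *\<^sub>R ones"
      if "\<forall>k. (\<Sum>t\<in>UNIV. M $ t $ k) = 1" for M :: "real^'n^'t" and j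
      using that by (simp add: centering_mult_vec column_def)
    then show ?thesis
      using A_col Q_col by (simp add: matrix_vector_mult_diff_distrib matrix_vector_mult_scaleR)
  qed
  finally show ?thesis .
qed

theorem lemmaB8:
  fixes P V :: "real^'n::finite^'n"
    and mu :: "real^'n"
    and Q A :: "real^'n^'t::finite"
  assumes P_nonneg: "\<forall>i j. P $ i $ j \<ge> 0"
    and P_col: "\<forall>j. (\<Sum>i\<in>UNIV. P $ i $ j) = 1"
    and mu_pos: "\<forall>i. mu $ i > 0"
    and mu_sum: "(\<Sum>i\<in>UNIV. mu $ i) = 1"
    and P_mu: "P *v mu = mu"
    and Q_nonneg: "\<forall>t k. Q $ t $ k \<ge> 0"
    and Q_col: "\<forall>k. (\<Sum>t\<in>UNIV. Q $ t $ k) = 1"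
    and V_col: "\<forall>j. (\<Sum>i\<in>UNIV. V $ i $ j) = 1"
    and V_mu: "V *v mu = mu"
    and A_col: "\<forall>k. (\<Sum>t\<in>UNIV. A $ t $ k) = 1"
  shows "(expect mu P Q (hat_grad_V mu V A)
           = mu_inner mu A A *\<^sub>R (V - outer mu ones)
             - mu_inner mu Q A *\<^sub>R (P - outer mu ones)) \<and>
         (\<forall>k. expect mu P Q (hat_grad_a mu V A k)
           = (mu_inner mu V V - (norm mu)\<^sup>2) *\<^sub>R (column k A - (1 / real CARD('t)) *\<^sub>R ones)
             - (mu_inner mu V P - (norm mu)\<^sup>2) *\<^sub>R (column k Q - (1 / real CARD('t)) *\<^sub>R ones))"
  using expect_hat_grad_V[OF mu_pos mu_sum P_col Q_col V_col A_col V_mu P_mu]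
    expect_hat_grad_a[OF mu_pos mu_sum P_col Q_col A_col V_mu P_mu]
  by blast

end
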